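(* Suppose Assumptions 1 and 2 hold, $J_0\ne\emptyset$, $0<\delta<1$, and Condition (L) holds for all $j=1,\dots,q$ with a constant $c'\in(0,1)$ satisfying Condition (C). Let $J\subseteq\{1,\dots,q\}$ with $|J|\le q^*$ and $J_0\setminus J\ne\emptyset$, and let $l=|J_0\setminus J|$. On the event $\mathcal E_{\delta,J\cup J_0}\cap\mathcal A$, $$\|\hat\Pi_{J_0}f\|_n^2-\|\hat\Pi_Jf\|_n^2\ge\frac12\frac{(1-\delta)^2}{1+\delta}(1-\rho_{q^*}^2)\kappa_l.$$
   Context: Let $q\ge1$ and let $(Y,X)$ be a pair of random variables with $X=(X_1,\dots,X_q)^T$, each $X_j$ real-valued, and $Y=\sum_{j=1}^q f_j(X_j)+\epsilon$, where $f_j\in L^2(\mathbb P^{X_j})$, $\mathbb E[f_j(X_j)]=0$ for $j=1,\dots,q-1$, and $\epsilon$ is a centered Gaussian variable with variance $\sigma^2$, independent of $X$. Write $f(x)=\sum_{j=1}^qf_j(x_j)$. The space $L^2(\mathbb P^X)$ carries the inner product $\langle g,h\rangle=\mathbb E[g(X)h(X)]$ and norm $\|g\|=\langle g,g\rangle^{1/2}$. Let $H_q=L^2(\mathbb P^{X_q})$ and $H_j=\{h\in L^2(\mathbb P^{X_j}):\mathbb E[h(X_j)]=0\}$ for $j<q$, viewed as subspaces of $L^2(\mathbb P^X)$ via $x\mapsto h(x_j)$; for $J\subseteq\{1,\dots,q\}$ let $H_J=\sum_{j\in J}H_j$ (with $H_\emptyset=\{0\}$). Let $J_0=\{j:\|f_j\|>0\}$,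 $s=|J_0|$, and let $q^*$ be an integer with $s\le q^*$. Let $\rho_{q^*}$ be the supremum of $\langle h_1,h_2\rangle/(\|h_1\|\|h_2\|)$ over all nonzero $h_1\in H_{J_1}$, $h_2\in H_{J_2}$ and all $J_1,J_2\subseteq\{1,\dots,q\}$ with $J_1\cap J_2=\emptyset$ and $|J_1|,|J_2|\le q^*$. Assumption 1 is the condition $\rho_{q^*}<1$. $\kappa=\min_{\emptyset\neq J\subseteq J_0}\|\sum_{j\in J}f_j\|^2$ and, for $1\le l\le s$, $\kappa_l=\min_{J'\subseteq J_0,|J'|=l}\|\sum_{j\in J'}f_j\|^2$. $\epsilon'_{q^*}$ is a positive number such that $\|\sum_{j\in J}g_j\|^2\le(1+\epsilon'_{q^*})\sum_{j\in J}\|g_j\|^2$ for all $J$ with $|J|\le q^*$ and all $g_j\in H_j$. Assumption 2: each $X_j$ takes values in $[0,1]$ and has a density $p_j$ with respect to Lebesgue measure with $c\le p_j\le 1/c$ for a constant $c>0$, and $f_j\in\tilde W_j(\alpha_j,K_j)=\{\sum_{k\ge1}\theta_k\phi_k:\sum_{k\ge1}(2\pi k)^{2\alpha_j}(\theta_{2k}^2+\theta_{2k+1}^2)\le K_j^2\}$ with $\alpha_j>1/2$, $K_j>0$, where $\phi_1=1$, $\phi_{2k}(x)=\sqrt2\cos(2\pi kx)$, $\phi_{2k+1}(x)=\sqrt2\sin(2\pi kx)$, $k\ge1$, on $[0,1]$. Given integers $m_j\ge1$, $V_j$ is the intersection of $H_j$ with the linear span of $\phi_1(x_j),\dots,\phi_{m_j}(x_j)$;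 $V_J=\sum_{j\in J}V_j$, $d_J=\dim V_J$, $d_l=\max_{|J|=l}d_J$; $\Pi_{V_j}$ is the orthogonal projection of $L^2(\mathbb P^X)$ onto $V_j$. $C_j>0$ denotes a constant depending only on $\alpha_j$ and $c$ such that $\|h-\Pi_{V_j}h\|^2\le C_jK_j^2m_j^{-2\alpha_j}$ and $\|h-\Pi_{V_j}h\|_\infty^2\le C_jK_j^2m_j^{1-2\alpha_j}$ for all $h\in\tilde W_j(\alpha_j,K_j)\cap H_j$ and all $m_j\ge1$. Condition (L): $m_j\ge\big(C_jK_j^2q^*(1+\epsilon'_{q^*})/(c'(1-\rho_{q^*}^2)\kappa)\big)^{1/(2\alpha_j)}$, where $c'\in(0,1)$ is a constant. Condition (C): $\frac23(1-\sqrt{c'})^2-8\frac{1+\delta}{(1-\delta)^2}c'\ge\frac12$. $X^1,\dots,X^n$ are independent copies of $X$. The empirical norm is $\|h\|_n^2=\frac1n\sum_{i=1}^nh(X^i)^2$ for functions and $\|u\|_n^2=\frac1n\|u\|_2^2$ for $u\in\mathbb R^n$. $\hat\Pi_J$ is the orthogonal projection of $\mathbb R^n$ onto $\{(g(X^1),\dots,g(X^n))^T:g\in V_J\}$, and for a function $h$ we write $\hat\Pi_Jh=\hat\Pi_J(h(X^1),\dots,h(X^n))^T$. For $0<\delta<1$ and $J\subseteq\{1,\dots,q\}$, $\mathcal E_{\delta,J}$ is the event that $(1-\delta)\|g\|^2\le\|g\|_n^2\le(1+\delta)\|g\|^2$ for all $g\in V_J$. $\mathcal A=\{\|f-\sum_{j\in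 J_0}\Pi_{V_j}f_j\|_n^2\le2c'(1-\rho_{q^*}^2)\kappa\}$. *)

theory Defs
  imports "HOL-Probability.Probability"
begin

text \<open>Points of the sample space are vectors x = (x_1,...,x_q) represented as
  functions nat \<Rightarrow> real (coordinates 1..q are the relevant ones).\<close>

definition lift :: "nat \<Rightarrow> (real \<Rightarrow> real) \<Rightarrow> (nat \<Rightarrow> real) \<Rightarrow> real" where
  "lift j h = (\<lambda>x. h (x j))"

definition L2sq :: "(nat \<Rightarrow> real) measure \<Rightarrow> ((nat \<Rightarrow> real) \<Rightarrow> real) \<Rightarrow> real" where
  "L2sq P g = (LINT x|P. (g x)\<^sup>2)"

definition inn :: "(nat \<Rightarrow> real) measure \<Rightarrow> ((nat \<Rightarrow> real) \<Rightarrow> real) \<Rightarrow> ((nat \<Rightarrow> real) \<Rightarrow> real) \<Rightarrow> real" where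
  "inn P g h = (LINT x|P. g x * h x)"

definition Hsp :: "(nat \<Rightarrow> real) measure \<Rightarrow> nat \<Rightarrow> nat \<Rightarrow> ((nat \<Rightarrow> real) \<Rightarrow> real) set" where
  "Hsp P q j = {lift j h | h. h \<in> borel_measurable borel \<and> integrable P (\<lambda>x. (h (x j))\<^sup>2)
      \<and> (j < q \<longrightarrow> (LINT x|P. h (x j)) = 0)}"

definition sumsp :: "(nat \<Rightarrow> ('a \<Rightarrow> real) set) \<Rightarrow> nat set \<Rightarrow> ('a \<Rightarrow> real) set" where
  "sumsp F J = {g. \<exists>gs. (\<forall>j\<in>J. gs j \<in> F j) \<and> g = (\<lambda>x. \<Sum>j\<in>J. gs j x)}"

text \<open>The value 0 is added to the set only to make the supremum
  well defined when no admissible pair exists (it never changes the supremum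
  otherwise, since the set is symmetric under h2 \<mapsto> -h2).\<close>
definition rho :: "(nat \<Rightarrow> real) measure \<Rightarrow> nat \<Rightarrow> nat \<Rightarrow> real" where
  "rho P q qs = Sup ({inn P h1 h2 / (sqrt (L2sq P h1) * sqrt (L2sq P h2)) | J1 J2 h1 h2.
      J1 \<subseteq> {1..q} \<and> J2 \<subseteq> {1..q} \<and> J1 \<inter> J2 = {} \<and> card J1 \<le> qs \<and> card J2 \<le> qs \<and>
      h1 \<in> sumsp (Hsp P q) J1 \<and> h2 \<in> sumsp (Hsp P q) J2 \<and> L2sq P h1 > 0 \<and> L2sq P h2 > 0} \<union> {0})"

definition phi :: "nat \<Rightarrow> real \<Rightarrow> real" where
  "phi k x = (if k = 1 then 1
     else if even k then sqrt 2 * cos (2 * pi * real (k div 2) * x)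
     else sqrt 2 * sin (2 * pi * real (k div 2) * x))"

definition sob :: "real \<Rightarrow> real \<Rightarrow> (real \<Rightarrow> real) set" where
  "sob \<alpha> K = {h. \<exists>\<theta> :: nat \<Rightarrow> real.
      summable (\<lambda>k. (2 * pi * real (k + 1)) powr (2 * \<alpha>) * ((\<theta> (2 * (k + 1)))\<^sup>2 + (\<theta> (2 * (k + 1) + 1))\<^sup>2))
    \<and> (\<Sum>k. (2 * pi * real (k + 1)) powr (2 * \<alpha>) * ((\<theta> (2 * (k + 1)))\<^sup>2 + (\<theta> (2 * (k + 1) + 1))\<^sup>2)) \<le> K\<^sup>2
    \<and> (\<forall>x\<in>{0..1}. (\<lambda>k. \<theta> (k + 1) * phi (k + 1) x) sums h x)}"

definition Vsp :: "(nat \<Rightarrow> real) measure \<Rightarrow> nat \<Rightarrow> nat \<Rightarrow> nat \<Rightarrow> ((nat \<Rightarrow> real) \<Rightarrow> real) set" where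
  "Vsp P q j m = {g \<in> Hsp P q j. \<exists>a :: nat \<Rightarrow> real. g = (\<lambda>x. \<Sum>k=1..m. a k * phi k (x j))}"

definition is_proj :: "(nat \<Rightarrow> real) measure \<Rightarrow> ((nat \<Rightarrow> real) \<Rightarrow> real) set \<Rightarrow> ((nat \<Rightarrow> real) \<Rightarrow> real)
    \<Rightarrow> ((nat \<Rightarrow> real) \<Rightarrow> real) \<Rightarrow> bool" where
  "is_proj P V h g \<longleftrightarrow> g \<in> V \<and> (\<forall>v\<in>V. inn P (\<lambda>x. h x - g x) v = 0)"

text \<open>Sample X^1..X^n indexed by a finite type 'n with n = CARD('n).\<close>
definition emp_sq :: "('n::finite \<Rightarrow> nat \<Rightarrow> real) \<Rightarrow> ((nat \<Rightarrow> real) \<Rightarrow> real) \<Rightarrow> real" where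
  "emp_sq Xs g = (\<Sum>i\<in>UNIV. (g (Xs i))\<^sup>2) / real CARD('n)"

definition svec :: "('n::finite \<Rightarrow> nat \<Rightarrow> real) \<Rightarrow> ((nat \<Rightarrow> real) \<Rightarrow> real) \<Rightarrow> real ^ 'n" where
  "svec Xs g = (\<chi> i. g (Xs i))"

definition is_vproj :: "(real ^ 'n::finite) set \<Rightarrow> real ^ 'n \<Rightarrow> real ^ 'n \<Rightarrow> bool" where
  "is_vproj S v u \<longleftrightarrow> u \<in> S \<and> (\<forall>w\<in>S. (v - u) \<bullet> w = 0)"

definition VJ :: "(nat \<Rightarrow> real) measure \<Rightarrow> nat \<Rightarrow> (nat \<Rightarrow> nat) \<Rightarrow> nat set \<Rightarrow> ((nat \<Rightarrow> real) \<Rightarrow> real) set" where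
  "VJ P q m J = sumsp (\<lambda>j. Vsp P q j (m j)) J"

definition Eev :: "(nat \<Rightarrow> real) measure \<Rightarrow> nat \<Rightarrow> (nat \<Rightarrow> nat) \<Rightarrow> ('n::finite \<Rightarrow> nat \<Rightarrow> real) \<Rightarrow> real \<Rightarrow> nat set \<Rightarrow> bool" where
  "Eev P q m Xs \<delta> J \<longleftrightarrow> (\<forall>g\<in>VJ P q m J.
      (1 - \<delta>) * L2sq P g \<le> emp_sq Xs g \<and> emp_sq Xs g \<le> (1 + \<delta>) * L2sq P g)"

definition J0set :: "(nat \<Rightarrow> real) measure \<Rightarrow> nat \<Rightarrow> (nat \<Rightarrow> real \<Rightarrow> real) \<Rightarrow> nat set" where
  "J0set P q f = {j \<in> {1..q}. L2sq P (lift j (f j)) > 0}"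

definition kappa :: "(nat \<Rightarrow> real) measure \<Rightarrow> nat \<Rightarrow> (nat \<Rightarrow> real \<Rightarrow> real) \<Rightarrow> real" where
  "kappa P q f = Min {L2sq P (\<lambda>x. \<Sum>j\<in>J'. f j (x j)) | J'. J' \<subseteq> J0set P q f \<and> J' \<noteq> {}}"

definition kappa_l :: "(nat \<Rightarrow> real) measure \<Rightarrow> nat \<Rightarrow> (nat \<Rightarrow> real \<Rightarrow> real) \<Rightarrow> nat \<Rightarrow> real" where
  "kappa_l P q f l = Min {L2sq P (\<lambda>x. \<Sum>j\<in>J'. f j (x j)) | J'. J' \<subseteq> J0set P q f \<and> card J' = l}"

end

theory Submission
  imports Defs
begin

text \<open>
  Let \<open>f\<^sup>* = \<Sum>\<^sub>j\<^sub>\<in>\<^sub>J\<^sub>0 \<Pi>\<^sub>V\<^sub>j f\<^sub>j\<close> and let \<open>v \<in> V\<^sub>J\<close> be the function whose sample vector is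
  \<open>\<Pi>\<^sub>J f\<close>. By Pythagoras the gap \<open>\<parallel>\<Pi>\<^sub>J\<^sub>0 f\<parallel>\<^sub>n\<^sup>2 - \<parallel>\<Pi>\<^sub>J f\<parallel>\<^sub>n\<^sup>2\<close> equals
  \<open>\<parallel>f - \<Pi>\<^sub>J f\<parallel>\<^sub>n\<^sup>2 - \<parallel>f - \<Pi>\<^sub>J\<^sub>0 f\<parallel>\<^sub>n\<^sup>2\<close>, which is at least
  \<open>2/3 \<parallel>f\<^sup>* - v\<parallel>\<^sub>n\<^sup>2 - 3 \<parallel>f - f\<^sup>*\<parallel>\<^sub>n\<^sup>2\<close>; on \<open>\<A>\<close> the second term is at most
  \<open>6c'(1 - \<rho>\<^sup>2)\<kappa>\<^sub>l\<close>. The difference \<open>f\<^sup>* - v\<close> lies in \<open>V\<^sub>J\<^sub>\<union>\<^sub>J\<^sub>0\<close>, so on \<open>\<E>\<close> its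
  empirical norm dominates \<open>(1 - \<delta>)\<close> times its population norm. Its components
  outside \<open>J\<close> are the \<open>\<Pi>\<^sub>V\<^sub>j f\<^sub>j\<close>, \<open>j \<in> J\<^sub>0 - J\<close>, so the correlation bound gives
  \<open>\<parallel>f\<^sup>* - v\<parallel>\<^sup>2 \<ge> (1 - \<rho>\<^sup>2) \<parallel>\<Sum>\<^sub>j\<^sub>\<in>\<^sub>J\<^sub>0\<^sub>-\<^sub>J \<Pi>\<^sub>V\<^sub>j f\<^sub>j\<parallel>\<^sup>2\<close>. Condition (L) makes the
  approximation errors \<open>f\<^sub>j - \<Pi>\<^sub>V\<^sub>j f\<^sub>j\<close> so small that this sum has squared norm at
  least \<open>(1 - \<surd>c')\<^sup>2 \<kappa>\<^sub>l\<close>, and condition (C) turns the resulting lower bound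
  into the claimed constant.
\<close>

section \<open>Square-integrable functions\<close>

definition square_integrable :: "'a measure \<Rightarrow> ('a \<Rightarrow> real) \<Rightarrow> bool" where
  "square_integrable M h \<longleftrightarrow> h \<in> borel_measurable M \<and> integrable M (\<lambda>x. (h x)\<^sup>2)"

lemma square_integrable_mult_integrable:
  assumes "square_integrable M a" "square_integrable M b"
  shows "integrable M (\<lambda>x. a x * b x)"
proof (rule Bochner_Integration.integrable_bound)
  show "integrable M (\<lambda>x. (a x)\<^sup>2 + (b x)\<^sup>2)"
    using assms by (auto simp: square_integrable_def)
  show "(\<lambda>x. a x * b x) \<in> borel_measurable M"
    using assms by (auto simp: square_integrable_def)
  have "\<bar>a x * b x\<bar> \<le> (a x)\<^sup>2 + (b x)\<^sup>2" for x
    using sum_squares_bound[of "\<bar>a x\<bar>" "\<bar>b x\<bar>"] abs_mult[of "a x" "b x"]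
      mult_nonneg_nonneg[OF abs_ge_zero abs_ge_zero, of "a x" "b x"]
    by simp
  then show "AE x in M. norm (a x * b x) \<le> norm ((a x)\<^sup>2 + (b x)\<^sup>2)"
    by (intro AE_I2) simp
qed

lemma square_integrable_add:
  assumes "square_integrable M a" "square_integrable M b"
  shows "square_integrable M (\<lambda>x. a x + b x)"
proof -
  have "integrable M (\<lambda>x. (a x)\<^sup>2 + 2 * (a x * b x) + (b x)\<^sup>2)"
    using assms square_integrable_mult_integrable[OF assms]
    by (auto simp: square_integrable_def)
  moreover have "(\<lambda>x. (a x)\<^sup>2 + 2 * (a x * b x) + (b x)\<^sup>2) = (\<lambda>x. (a x + b x)\<^sup>2)"
    by (simp add: power2_sum algebra_simps)
  ultimately show ?thesis
    using assms by (auto simp: square_integrable_def)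
qed

lemma square_integrable_cmult:
  "square_integrable M a \<Longrightarrow> square_integrable M (\<lambda>x. c * a x)"
  by (auto simp: square_integrable_def power_mult_distrib)

lemma square_integrable_diff:
  "square_integrable M a \<Longrightarrow> square_integrable M b \<Longrightarrow> square_integrable M (\<lambda>x. a x - b x)"
  using square_integrable_add[OF _ square_integrable_cmult, of M a b "-1"] by simp

lemma square_integrable_sum:
  "finite J \<Longrightarrow> (\<And>j. j \<in> J \<Longrightarrow> square_integrable M (gs j))
    \<Longrightarrow> square_integrable M (\<lambda>x. \<Sum>j\<in>J. gs j x)"
proof (induction J rule: finite_induct)
  case empty
  then show ?case by (simp add: square_integrable_def)
next
  case (insert i J)
  then have "square_integrable M (\<lambda>x. gs i x + (\<Sum>j\<in>J. gs j x))"
    by (intro square_integrable_add) auto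
  then show ?case using insert by simp
qed

lemma L2sq_nonneg: "0 \<le> L2sq M h"
  unfolding L2sq_def by simp

lemma L2sq_add:
  assumes "square_integrable M a" "square_integrable M b"
  shows "L2sq M (\<lambda>x. a x + b x) = L2sq M a + 2 * inn M a b + L2sq M b"
proof -
  have "(\<lambda>x. (a x + b x)\<^sup>2) = (\<lambda>x. (a x)\<^sup>2 + 2 * (a x * b x) + (b x)\<^sup>2)"
    by (simp add: power2_sum algebra_simps)
  then show ?thesis
    using assms square_integrable_mult_integrable[OF assms]
    by (simp add: L2sq_def inn_def square_integrable_def)
qed

lemma L2sq_cmult: "L2sq M (\<lambda>x. c * a x) = c\<^sup>2 * L2sq M a"
  by (simp add: L2sq_def power_mult_distrib)

lemma L2sq_uminus: "L2sq M (\<lambda>x. - h x) = L2sq M h"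
  by (simp add: L2sq_def)

lemma inn_uminus_right: "inn M a (\<lambda>x. - h x) = - inn M a h"
  by (simp add: inn_def)

lemma inn_cmult_right: "inn M a (\<lambda>x. c * b x) = c * inn M a b"
  by (simp add: inn_def mult.left_commute)

lemma inn_Cauchy_Schwarz:
  assumes "square_integrable M a" "square_integrable M b"
  shows "\<bar>inn M a b\<bar> \<le> sqrt (L2sq M a) * sqrt (L2sq M b)"
proof -
  let ?A = "L2sq M a" and ?B = "L2sq M b" and ?I = "inn M a b"
  have quadratic: "0 \<le> ?A + 2 * t * ?I + t\<^sup>2 * ?B" for t
    using L2sq_add[OF assms(1) square_integrable_cmult[OF assms(2)], of t]
      L2sq_nonneg[of M "\<lambda>x. a x + t * b x"]
    by (simp add: inn_cmult_right L2sq_cmult)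
  have "?I\<^sup>2 \<le> ?A * ?B"
  proof (cases "?B = 0")
    case True
    have "?I = 0"
    proof (rule ccontr)
      assume "?I \<noteq> 0"
      then show False
        using quadratic[of "- (?A + 1) / (2 * ?I)"] True by (simp add: field_simps)
    qed
    then show ?thesis using True by simp
  next
    case False
    then have "?B > 0" using L2sq_nonneg[of M b] by simp
    then show ?thesis
      using quadratic[of "- ?I / ?B"] by (simp add: field_simps power2_eq_square)
  qed
  then have "sqrt (?I\<^sup>2) \<le> sqrt (?A * ?B)"
    by (rule real_sqrt_le_mono)
  then show ?thesis
    by (simp add: real_sqrt_mult)
qed

lemma sqrt_L2sq_add_le:
  assumes "square_integrable M a" "square_integrable M b"
  shows "sqrt (L2sq M (\<lambda>x. a x + b x)) \<le> sqrt (L2sq M a) + sqrt (L2sq M b)"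
proof -
  have "L2sq M (\<lambda>x. a x + b x) \<le> (sqrt (L2sq M a) + sqrt (L2sq M b))\<^sup>2"
    using L2sq_add[OF assms] inn_Cauchy_Schwarz[OF assms] L2sq_nonneg[of M a] L2sq_nonneg[of M b]
    by (simp add: power2_sum)
  then have "sqrt (L2sq M (\<lambda>x. a x + b x)) \<le> sqrt ((sqrt (L2sq M a) + sqrt (L2sq M b))\<^sup>2)"
    by (rule real_sqrt_le_mono)
  then show ?thesis
    using L2sq_nonneg[of M a] L2sq_nonneg[of M b] by simp
qed

lemma L2sq_ge_of_perturbation:
  assumes "square_integrable M a" "square_integrable M e"
    and "\<kappa> \<le> L2sq M (\<lambda>x. a x + e x)" "L2sq M e \<le> c * \<kappa>" "0 \<le> c" "c \<le> 1" "0 \<le> \<kappa>"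
  shows "(1 - sqrt c)\<^sup>2 * \<kappa> \<le> L2sq M a"
proof -
  have "sqrt \<kappa> \<le> sqrt (L2sq M a) + sqrt (L2sq M e)"
    using real_sqrt_le_mono[OF assms(3)] sqrt_L2sq_add_le[OF assms(1,2)] by linarith
  moreover have "sqrt (L2sq M e) \<le> sqrt c * sqrt \<kappa>"
    using real_sqrt_le_mono[OF assms(4)] by (simp add: real_sqrt_mult)
  ultimately have "(1 - sqrt c) * sqrt \<kappa> \<le> sqrt (L2sq M a)"
    by (simp add: algebra_simps)
  moreover have "0 \<le> (1 - sqrt c) * sqrt \<kappa>"
    using assms(6,7) by simp
  ultimately have "((1 - sqrt c) * sqrt \<kappa>)\<^sup>2 \<le> (sqrt (L2sq M a))\<^sup>2"
    by (rule power_mono)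
  then show ?thesis
    using assms(7) L2sq_nonneg[of M a] by (simp add: power_mult_distrib)
qed

lemma measurable_coordinate:
  assumes "sets P = sets (PiM {1..q} (\<lambda>_. borel))" "j \<in> {1..q}"
  shows "(\<lambda>x. x j) \<in> measurable P (borel :: real measure)"
  using measurable_component_singleton[OF assms(2), of "\<lambda>_. borel"]
  by (simp add: measurable_cong_sets[OF assms(1) refl])

lemma square_integrable_lift:
  assumes "sets P = sets (PiM {1..q} (\<lambda>_. borel))" "j \<in> {1..q}"
    and "h \<in> borel_measurable borel" "integrable P (\<lambda>x. (h (x j))\<^sup>2)"
  shows "square_integrable P (lift j h)"
  using measurable_comp[OF measurable_coordinate[OF assms(1,2)] assms(3)] assms(4)
  by (simp add: square_integrable_def lift_def o_def)

lemma Hsp_square_integrable: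
  assumes "sets P = sets (PiM {1..q} (\<lambda>_. borel))" "j \<in> {1..q}" "a \<in> Hsp P q j"
  shows "square_integrable P a"
  using assms square_integrable_lift[OF assms(1,2)] unfolding Hsp_def by auto

lemma Hsp_zero: "(\<lambda>x. 0) \<in> Hsp P q j"
  unfolding Hsp_def by (auto simp: lift_def intro!: exI[of _ "\<lambda>t. 0"])

lemma Hsp_diff:
  assumes "prob_space P" "sets P = sets (PiM {1..q} (\<lambda>_. borel))" "j \<in> {1..q}"
    and "a \<in> Hsp P q j" "b \<in> Hsp P q j"
  shows "(\<lambda>x. a x - b x) \<in> Hsp P q j"
proof -
  interpret prob_space P by (rule assms(1))
  obtain ha where ha: "a = lift j ha" "ha \<in> borel_measurable borel"
      "integrable P (\<lambda>x. (ha (x j))\<^sup>2)" "j < q \<longrightarrow> (LINT x|P. ha (x j)) = 0"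
    using assms(4) unfolding Hsp_def by auto
  obtain hb where hb: "b = lift j hb" "hb \<in> borel_measurable borel"
      "integrable P (\<lambda>x. (hb (x j))\<^sup>2)" "j < q \<longrightarrow> (LINT x|P. hb (x j)) = 0"
    using assms(5) unfolding Hsp_def by auto
  have sq: "square_integrable P (lift j ha)" "square_integrable P (lift j hb)"
    using square_integrable_lift[OF assms(2,3)] ha hb by auto
  then have "integrable P (\<lambda>x. ha (x j))" "integrable P (\<lambda>x. hb (x j))"
    using square_integrable_imp_integrable by (auto simp: square_integrable_def lift_def)
  moreover have "square_integrable P (\<lambda>x. ha (x j) - hb (x j))"
    using square_integrable_diff[OF sq] by (simp add: lift_def)
  moreover have "(\<lambda>t. ha t - hb t) \<in> borel_measurable borel"
    using ha(2) hb(2) by measurable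
  ultimately show ?thesis
    unfolding Hsp_def using ha hb
    by (auto simp: lift_def square_integrable_def intro!: exI[of _ "\<lambda>t. ha t - hb t"])
qed

lemma Hsp_uminus:
  "prob_space P \<Longrightarrow> sets P = sets (PiM {1..q} (\<lambda>_. borel)) \<Longrightarrow> j \<in> {1..q}
    \<Longrightarrow> a \<in> Hsp P q j \<Longrightarrow> (\<lambda>x. - a x) \<in> Hsp P q j"
  using Hsp_diff[OF _ _ _ Hsp_zero, of P q j a] by simp

lemma Vsp_subset_Hsp: "Vsp P q j m \<subseteq> Hsp P q j"
  unfolding Vsp_def by auto

lemma Vsp_zero: "(\<lambda>x. 0) \<in> Vsp P q j m"
  unfolding Vsp_def using Hsp_zero by (auto intro!: exI[of _ "\<lambda>k. 0"])

lemma Vsp_diff: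
  assumes "prob_space P" "sets P = sets (PiM {1..q} (\<lambda>_. borel))" "j \<in> {1..q}"
    and "a \<in> Vsp P q j m" "b \<in> Vsp P q j m"
  shows "(\<lambda>x. a x - b x) \<in> Vsp P q j m"
proof -
  obtain ca cb where "a = (\<lambda>x. \<Sum>k=1..m. ca k * phi k (x j))" "b = (\<lambda>x. \<Sum>k=1..m. cb k * phi k (x j))"
    using assms(4,5) unfolding Vsp_def by auto
  then have "(\<lambda>x. a x - b x) = (\<lambda>x. \<Sum>k=1..m. (ca k - cb k) * phi k (x j))"
    by (simp add: sum_subtractf left_diff_distrib)
  moreover have "(\<lambda>x. a x - b x) \<in> Hsp P q j"
    using Hsp_diff[OF assms(1-3)] assms(4,5) Vsp_subset_Hsp by blast
  ultimately show ?thesis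
    unfolding Vsp_def by auto
qed

lemma sumsp_mono: "(\<And>j. j \<in> J \<Longrightarrow> F j \<subseteq> G j) \<Longrightarrow> sumsp F J \<subseteq> sumsp G J"
  unfolding sumsp_def by blast

lemma sumsp_Hsp_square_integrable:
  assumes "sets P = sets (PiM {1..q} (\<lambda>_. borel))" "J \<subseteq> {1..q}" "h \<in> sumsp (Hsp P q) J"
  shows "square_integrable P h"
proof -
  obtain gs where gs: "\<forall>j\<in>J. gs j \<in> Hsp P q j" "h = (\<lambda>x. \<Sum>j\<in>J. gs j x)"
    using assms(3) unfolding sumsp_def by auto
  have "\<And>j. j \<in> J \<Longrightarrow> square_integrable P (gs j)"
    using gs(1) assms(2) Hsp_square_integrable[OF assms(1)] by blast
  then show ?thesis
    unfolding gs(2) by (rule square_integrable_sum[OF finite_subset[OF assms(2)], simplified])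
qed

lemma sumsp_Hsp_uminus:
  assumes "prob_space P" "sets P = sets (PiM {1..q} (\<lambda>_. borel))" "J \<subseteq> {1..q}"
    and "h \<in> sumsp (Hsp P q) J"
  shows "(\<lambda>x. - h x) \<in> sumsp (Hsp P q) J"
proof -
  obtain gs where gs: "\<forall>j\<in>J. gs j \<in> Hsp P q j" "h = (\<lambda>x. \<Sum>j\<in>J. gs j x)"
    using assms(4) unfolding sumsp_def by auto
  then have "\<forall>j\<in>J. (\<lambda>x. - gs j x) \<in> Hsp P q j"
    using Hsp_uminus[OF assms(1,2)] assms(3) by blast
  moreover have "(\<lambda>x. - h x) = (\<lambda>x. \<Sum>j\<in>J. - gs j x)"
    unfolding gs(2) by (simp add: sum_negf)
  ultimately show ?thesis
    unfolding sumsp_def mem_Collect_eq by (intro exI[of _ "\<lambda>j x. - gs j x"]) simp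
qed

section \<open>The correlation bound\<close>

lemma correlation_le_1:
  assumes "square_integrable M a" "square_integrable M b" "L2sq M a > 0" "L2sq M b > 0"
  shows "inn M a b / (sqrt (L2sq M a) * sqrt (L2sq M b)) \<le> 1"
  using inn_Cauchy_Schwarz[OF assms(1,2)] assms(3,4) by simp

lemma bdd_above_correlations:
  assumes "sets P = sets (PiM {1..q} (\<lambda>_. borel))"
  shows "bdd_above ({inn P h1 h2 / (sqrt (L2sq P h1) * sqrt (L2sq P h2)) | J1 J2 h1 h2.
      J1 \<subseteq> {1..q} \<and> J2 \<subseteq> {1..q} \<and> J1 \<inter> J2 = {} \<and> card J1 \<le> qs \<and> card J2 \<le> qs \<and>
      h1 \<in> sumsp (Hsp P q) J1 \<and> h2 \<in> sumsp (Hsp P q) J2 \<and> L2sq P h1 > 0 \<and> L2sq P h2 > 0} \<union> {0})"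
  by (rule bdd_aboveI[where M = 1])
    (use correlation_le_1 sumsp_Hsp_square_integrable[OF assms] in fastforce)

lemma rho_nonneg: "sets P = sets (PiM {1..q} (\<lambda>_. borel)) \<Longrightarrow> 0 \<le> rho P q qs"
  unfolding rho_def by (rule cSup_upper[OF _ bdd_above_correlations]) auto

lemma correlation_le_rho:
  assumes "sets P = sets (PiM {1..q} (\<lambda>_. borel))"
    and "J1 \<subseteq> {1..q}" "J2 \<subseteq> {1..q}" "J1 \<inter> J2 = {}" "card J1 \<le> qs" "card J2 \<le> qs"
    and "h1 \<in> sumsp (Hsp P q) J1" "h2 \<in> sumsp (Hsp P q) J2" "L2sq P h1 > 0" "L2sq P h2 > 0"
  shows "inn P h1 h2 / (sqrt (L2sq P h1) * sqrt (L2sq P h2)) \<le> rho P q qs"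
  unfolding rho_def by (rule cSup_upper[OF _ bdd_above_correlations[OF assms(1)]]) (use assms in blast)

text \<open>Applied to \<open>-h\<^sub>2\<close>, the correlation bound gives \<open>\<langle>h\<^sub>1, h\<^sub>2\<rangle> \<ge> -\<rho> \<parallel>h\<^sub>1\<parallel> \<parallel>h\<^sub>2\<parallel>\<close>;
  then minimise the resulting quadratic in \<open>\<parallel>h\<^sub>2\<parallel>\<close>.\<close>
lemma L2sq_add_ge_rho:
  assumes "prob_space P" and sets_P: "sets P = sets (PiM {1..q} (\<lambda>_. borel))"
    and J: "J1 \<subseteq> {1..q}" "J2 \<subseteq> {1..q}" "J1 \<inter> J2 = {}" "card J1 \<le> qs" "card J2 \<le> qs"
    and h: "h1 \<in> sumsp (Hsp P q) J1" "h2 \<in> sumsp (Hsp P q) J2"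
  shows "(1 - (rho P q qs)\<^sup>2) * L2sq P h1 \<le> L2sq P (\<lambda>x. h1 x + h2 x)"
proof -
  let ?r = "rho P q qs" and ?A = "sqrt (L2sq P h1)" and ?B = "sqrt (L2sq P h2)"
  have sq: "square_integrable P h1" "square_integrable P h2"
    using sumsp_Hsp_square_integrable[OF sets_P] J h by auto
  have "- inn P h1 h2 \<le> ?r * (?A * ?B)"
  proof (cases "L2sq P h1 > 0 \<and> L2sq P h2 > 0")
    case True
    then have pos: "?A * ?B > 0"
      by simp
    have "- (inn P h1 h2 / (?A * ?B)) \<le> ?r"
      using correlation_le_rho[OF sets_P J h(1) sumsp_Hsp_uminus[OF assms(1,2) J(2) h(2)]] True
      by (simp add: L2sq_uminus inn_uminus_right)
    then show ?thesis
      by (simp only: minus_divide_left pos_divide_le_eq[OF pos])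
  next
    case False
    then have "L2sq P h1 = 0 \<or> L2sq P h2 = 0"
      using L2sq_nonneg[of P h1] L2sq_nonneg[of P h2] by linarith
    then show ?thesis
      using inn_Cauchy_Schwarz[OF sq] by auto
  qed
  moreover have A: "?A\<^sup>2 = L2sq P h1" and B: "?B\<^sup>2 = L2sq P h2"
    using L2sq_nonneg[of P h1] L2sq_nonneg[of P h2] by simp_all
  moreover have "(1 - ?r\<^sup>2) * ?A\<^sup>2 \<le> ?A\<^sup>2 - 2 * ?r * ?A * ?B + ?B\<^sup>2"
    using zero_le_power2[of "?B - ?r * ?A"] by (simp add: power2_eq_square algebra_simps)
  ultimately show ?thesis
    unfolding A B using L2sq_add[OF sq] by linarith
qed

lemma finite_J0set: "finite (J0set P q f)"
  unfolding J0set_def by simp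

lemma finite_L2sq_sums:
  "finite {L2sq P (\<lambda>x. \<Sum>j\<in>I. f j (x j)) | I. I \<subseteq> J0set P q f \<and> R I}"
proof (rule finite_image_set)
  show "finite {I. I \<subseteq> J0set P q f \<and> R I}"
    by (rule finite_subset[of _ "Pow (J0set P q f)"]) (auto simp: finite_J0set)
qed

lemma kappa_l_le_L2sq:
  assumes "I \<subseteq> J0set P q f"
  shows "kappa_l P q f (card I) \<le> L2sq P (\<lambda>x. \<Sum>j\<in>I. f j (x j))"
  unfolding kappa_l_def
  by (rule Min_le[OF finite_L2sq_sums[where R = "\<lambda>J'. card J' = card I"]]) (use assms in blast)

lemma kappa_le_kappa_l:
  assumes "I \<subseteq> J0set P q f" "I \<noteq> {}"
  shows "kappa P q f \<le> kappa_l P q f (card I)"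
proof -
  have "0 < card I"
    using assms finite_subset[OF assms(1) finite_J0set] by (simp add: card_gt_0_iff)
  then have "{L2sq P (\<lambda>x. \<Sum>j\<in>J'. f j (x j)) | J'. J' \<subseteq> J0set P q f \<and> card J' = card I}
      \<subseteq> {L2sq P (\<lambda>x. \<Sum>j\<in>J'. f j (x j)) | J'. J' \<subseteq> J0set P q f \<and> J' \<noteq> {}}"
    by auto
  moreover have "{L2sq P (\<lambda>x. \<Sum>j\<in>J'. f j (x j)) | J'. J' \<subseteq> J0set P q f \<and> card J' = card I} \<noteq> {}"
    using assms(1) by auto
  ultimately show ?thesis
    unfolding kappa_def kappa_l_def
    by (rule Min_antimono[OF _ _ finite_L2sq_sums[where R = "\<lambda>J'. J' \<noteq> {}"]])
qed

section \<open>Projections in the sample space\<close>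

lemma is_vproj_nearest:
  assumes "is_vproj S v u" "w \<in> S"
  shows "(norm (v - u))\<^sup>2 \<le> (norm (v - w))\<^sup>2"
proof -
  have "(v - u) \<bullet> (u - w) = 0"
    using assms unfolding is_vproj_def by (simp add: inner_diff_right)
  then have "(norm (v - w))\<^sup>2 = (norm (v - u))\<^sup>2 + (norm (u - w))\<^sup>2"
    using dot_norm[of "v - u" "u - w"] by simp
  then show ?thesis
    by simp
qed

lemma is_vproj_pythagoras:
  assumes "is_vproj S v u"
  shows "(norm u)\<^sup>2 = (norm v)\<^sup>2 - (norm (v - u))\<^sup>2"
proof -
  have "(v - u) \<bullet> u = 0"
    using assms unfolding is_vproj_def by simp
  then show ?thesis
    using dot_norm[of "v - u" u] by simp
qed

text \<open>With \<open>a = \<parallel>w\<^sub>0 - u\<parallel>\<close> and \<open>b = \<parallel>v - w\<^sub>0\<parallel>\<close>, the gap is at least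
  \<open>(a - b)\<^sup>2 - b\<^sup>2 = a\<^sup>2 - 2ab\<close>, and \<open>2ab \<le> a\<^sup>2/3 + 3b\<^sup>2\<close>.\<close>
lemma is_vproj_gap:
  assumes "is_vproj S\<^sub>0 v u\<^sub>0" "is_vproj S v u" "w\<^sub>0 \<in> S\<^sub>0"
  shows "2/3 * (norm (w\<^sub>0 - u))\<^sup>2 - 3 * (norm (v - w\<^sub>0))\<^sup>2 \<le> (norm u\<^sub>0)\<^sup>2 - (norm u)\<^sup>2"
proof -
  define a b where "a = norm (w\<^sub>0 - u)" and "b = norm (v - w\<^sub>0)"
  have "\<bar>a - b\<bar> \<le> \<bar>norm (v - u)\<bar>"
    using norm_triangle_ineq3[of "w\<^sub>0 - u" "w\<^sub>0 - v"]
    by (simp add: a_def b_def norm_minus_commute[of w\<^sub>0 v])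
  then have "(a - b)\<^sup>2 \<le> (norm (v - u))\<^sup>2"
    by (simp only: abs_le_square_iff)
  moreover have "2 * a * b \<le> a\<^sup>2 / 3 + 3 * b\<^sup>2"
    using zero_le_power2[of "a - 3 * b"] by (simp add: power2_eq_square algebra_simps)
  moreover have "(norm (v - u\<^sub>0))\<^sup>2 \<le> b\<^sup>2"
    unfolding b_def by (rule is_vproj_nearest[OF assms(1,3)])
  ultimately show ?thesis
    using is_vproj_pythagoras[OF assms(1)] is_vproj_pythagoras[OF assms(2)]
    unfolding a_def[symmetric] b_def[symmetric] by (simp add: power2_diff)
qed

lemma norm_svec_sq: "(norm (svec Xs h))\<^sup>2 = real CARD('n) * emp_sq (Xs :: 'n::finite \<Rightarrow> nat \<Rightarrow> real) h"
  unfolding emp_sq_def svec_def norm_vec_def L2_set_def by (simp add: sum_nonneg)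

lemma svec_diff: "svec Xs (\<lambda>x. a x - b x) = svec Xs a - svec Xs b"
  by (simp add: svec_def vec_eq_iff)

lemma empirical_projection_gap:
  fixes Xs :: "'n::finite \<Rightarrow> nat \<Rightarrow> real"
  assumes "is_vproj (svec Xs ` V\<^sub>0) (svec Xs F) u\<^sub>0" "is_vproj (svec Xs ` V) (svec Xs F) u"
    and "w\<^sub>0 \<in> V\<^sub>0" "u = svec Xs w"
  shows "2/3 * emp_sq Xs (\<lambda>x. w\<^sub>0 x - w x) - 3 * emp_sq Xs (\<lambda>x. F x - w\<^sub>0 x)
    \<le> (norm u\<^sub>0)\<^sup>2 / real CARD('n) - (norm u)\<^sup>2 / real CARD('n)"
proof -
  have "2/3 * (norm (svec Xs w\<^sub>0 - u))\<^sup>2 - 3 * (norm (svec Xs F - svec Xs w\<^sub>0))\<^sup>2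
      \<le> (norm u\<^sub>0)\<^sup>2 - (norm u)\<^sup>2"
    using is_vproj_gap[OF assms(1,2)] assms(3) by blast
  then show ?thesis
    unfolding assms(4) svec_diff[symmetric] norm_svec_sq
    by (simp add: field_simps)
qed

lemma powr_neg_le_inverse:
  fixes a X t :: real
  assumes "0 < a" "0 < X" "X powr (1 / a) \<le> t"
  shows "t powr (- a) \<le> 1 / X"
proof -
  have "t powr (- a) \<le> (X powr (1 / a)) powr (- a)"
    using assms by (intro powr_mono2') auto
  also have "\<dots> = 1 / X"
    using assms(1,2) by (simp add: powr_powr powr_neg_one)
  finally show ?thesis .
qed

lemma condition_C_consequence:
  fixes \<delta> c' :: real
  assumes "0 < \<delta>" "\<delta> < 1" "0 < c'"
    and "2/3 * (1 - sqrt c')\<^sup>2 - 8 * (1 + \<delta>) / (1 - \<delta>)\<^sup>2 * c' \<ge> 1/2"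
  shows "1/2 * ((1 - \<delta>)\<^sup>2 / (1 + \<delta>)) \<le> 2/3 * (1 - \<delta>) * (1 - sqrt c')\<^sup>2 - 6 * c'"
proof -
  have "1/2 * ((1 - \<delta>)\<^sup>2 / (1 + \<delta>)) \<le> 1/2 * (1 - \<delta>)"
    using assms(1,2) by (simp add: field_simps power2_eq_square)
  also have "\<dots> \<le> (2/3 * (1 - sqrt c')\<^sup>2 - 8 * (1 + \<delta>) / (1 - \<delta>)\<^sup>2 * c') * (1 - \<delta>)"
    by (rule mult_right_mono[OF assms(4)]) (use assms(2) in simp)
  also have "\<dots> = 2/3 * (1 - \<delta>) * (1 - sqrt c')\<^sup>2 - 8 * (1 + \<delta>) / (1 - \<delta>) * c'"
  proof -
    have "a / x\<^sup>2 * b * x = a / x * b" if "x \<noteq> 0" for x a b :: real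
      using that by (simp add: power2_eq_square field_simps)
    then show ?thesis
      using assms(2) by (simp add: left_diff_distrib)
  qed
  also have "\<dots> \<le> 2/3 * (1 - \<delta>) * (1 - sqrt c')\<^sup>2 - 6 * c'"
  proof -
    have "6 \<le> 8 * (1 + \<delta>) / (1 - \<delta>)"
      using assms(1,2) by (simp add: field_simps)
    then show ?thesis
      using mult_right_mono[of 6 "8 * (1 + \<delta>) / (1 - \<delta>)" c'] assms(3) by simp
  qed
  finally show ?thesis .
qed

lemma condition_C_gap:
  fixes \<delta> c' A d r G :: real
  assumes "0 < \<delta>" "\<delta> < 1" "0 < c'"
    and "2/3 * (1 - sqrt c')\<^sup>2 - 8 * (1 + \<delta>) / (1 - \<delta>)\<^sup>2 * c' \<ge> 1/2"
    and "0 \<le> A" "(1 - \<delta>) * (1 - sqrt c')\<^sup>2 * A \<le> d" "r \<le> 2 * c' * A" "2/3 * d - 3 * r \<le> G"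
  shows "1/2 * ((1 - \<delta>)\<^sup>2 / (1 + \<delta>)) * A \<le> G"
proof -
  have "1/2 * ((1 - \<delta>)\<^sup>2 / (1 + \<delta>)) * A \<le> (2/3 * (1 - \<delta>) * (1 - sqrt c')\<^sup>2 - 6 * c') * A"
    by (rule mult_right_mono[OF condition_C_consequence[OF assms(1-4)] assms(5)])
  also have "\<dots> = 2/3 * ((1 - \<delta>) * (1 - sqrt c')\<^sup>2 * A) - 3 * (2 * c' * A)"
    by (simp add: field_simps)
  also have "\<dots> \<le> G"
    using assms(6-8) by linarith
  finally show ?thesis .
qed

section \<open>The additive model\<close>

lemma VJ_subset_sumsp_Hsp: "VJ P q m J \<subseteq> sumsp (Hsp P q) J"
  unfolding VJ_def by (rule sumsp_mono) (rule Vsp_subset_Hsp)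

lemma VJ_diff_decompose:
  assumes "prob_space P" "sets P = sets (PiM {1..q} (\<lambda>_. borel))" "J \<subseteq> {1..q}" "I \<subseteq> {1..q}"
    and g: "\<And>j. j \<in> I \<Longrightarrow> g j \<in> Vsp P q j (m j)" and v: "v \<in> VJ P q m J"
  obtains w where "w \<in> VJ P q m J"
    and "(\<lambda>x. (\<Sum>j\<in>I. g j x) - v x) = (\<lambda>x. (\<Sum>j\<in>I - J. g j x) + w x)"
    and "(\<lambda>x. (\<Sum>j\<in>I. g j x) - v x) \<in> VJ P q m (J \<union> I)"
proof -
  obtain vs where vs: "\<forall>j\<in>J. vs j \<in> Vsp P q j (m j)" "v = (\<lambda>x. \<Sum>j\<in>J. vs j x)"
    using v unfolding VJ_def sumsp_def by blast
  define ds where "ds j x = (if j \<in> I then g j x else 0) - (if j \<in> J then vs j x else 0)" for j x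
  have fin: "finite I" "finite J"
    using assms(3,4) finite_subset by auto
  have ds_V: "ds j \<in> Vsp P q j (m j)" if "j \<in> J \<union> I" for j
  proof -
    have "(\<lambda>x. if j \<in> I then g j x else 0) \<in> Vsp P q j (m j)"
      using g Vsp_zero by (cases "j \<in> I") auto
    moreover have "(\<lambda>x. if j \<in> J then vs j x else 0) \<in> Vsp P q j (m j)"
      using vs(1) Vsp_zero by (cases "j \<in> J") auto
    ultimately show ?thesis
      unfolding ds_def using Vsp_diff[OF assms(1,2)] that assms(3,4) by blast
  qed
  have sum_ds: "(\<Sum>j\<in>J \<union> I. ds j x) = (\<Sum>j\<in>I. g j x) - v x" for x
    using fin by (simp add: ds_def sum_subtractf sum.If_cases Int_absorb1 Int_absorb2 vs(2))
  have split: "(\<Sum>j\<in>J \<union> I. ds j x) = (\<Sum>j\<in>I - J. g j x) + (\<Sum>j\<in>J. ds j x)" for x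
  proof -
    have "(\<Sum>j\<in>J \<union> I. ds j x) = (\<Sum>j\<in>(I - J) \<union> J. ds j x)"
      by (simp add: Un_commute)
    also have "\<dots> = (\<Sum>j\<in>I - J. ds j x) + (\<Sum>j\<in>J. ds j x)"
      by (rule sum.union_disjoint) (use fin in auto)
    also have "(\<Sum>j\<in>I - J. ds j x) = (\<Sum>j\<in>I - J. g j x)"
      by (rule sum.cong) (auto simp: ds_def)
    finally show ?thesis .
  qed
  show ?thesis
  proof
    show "(\<lambda>x. \<Sum>j\<in>J. ds j x) \<in> VJ P q m J"
      unfolding VJ_def sumsp_def using ds_V by blast
    show "(\<lambda>x. (\<Sum>j\<in>I. g j x) - v x) = (\<lambda>x. (\<Sum>j\<in>I - J. g j x) + (\<Sum>j\<in>J. ds j x))"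
      using sum_ds split by simp
    show "(\<lambda>x. (\<Sum>j\<in>I. g j x) - v x) \<in> VJ P q m (J \<union> I)"
      unfolding VJ_def sumsp_def using ds_V sum_ds by fastforce
  qed
qed

locale additive_model =
  fixes P :: "(nat \<Rightarrow> real) measure" and q qs :: nat and f :: "nat \<Rightarrow> real \<Rightarrow> real"
  assumes prob: "prob_space P"
    and sets_P: "sets P = sets (PiM {1..q} (\<lambda>_. borel))"
    and f_L2: "\<And>j. j \<in> {1..q} \<Longrightarrow> f j \<in> borel_measurable borel \<and> integrable P (\<lambda>x. (f j (x j))\<^sup>2)"
    and f_centered: "\<And>j. j \<in> {1..q} \<Longrightarrow> j < q \<Longrightarrow> (LINT x|P. f j (x j)) = 0"
    and card_J0set_le: "card (J0set P q f) \<le> qs"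
    and rho_less_1: "rho P q qs < 1"
begin

lemma J0set_subset: "J0set P q f \<subseteq> {1..q}"
  unfolding J0set_def by auto

lemma lift_f_in_Hsp: "j \<in> {1..q} \<Longrightarrow> lift j (f j) \<in> Hsp P q j"
  unfolding Hsp_def using f_L2 f_centered by blast

lemma sum_f_in_sumsp: "I \<subseteq> {1..q} \<Longrightarrow> (\<lambda>x. \<Sum>j\<in>I. f j (x j)) \<in> sumsp (Hsp P q) I"
  unfolding sumsp_def using lift_f_in_Hsp by (auto simp: lift_def intro!: exI[of _ "\<lambda>j. lift j (f j)"])

lemma one_minus_rho_sq_pos: "0 < 1 - (rho P q qs)\<^sup>2"
proof -
  have "(rho P q qs)\<^sup>2 \<le> rho P q qs"
    using rho_nonneg[OF sets_P] rho_less_1 by (simp add: power2_eq_square mult_left_le)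
  then show ?thesis
    using rho_less_1 by linarith
qed

lemma card_le_qs: "I \<subseteq> J0set P q f \<Longrightarrow> card I \<le> qs"
  using card_mono[OF finite_J0set] card_J0set_le le_trans by blast

text \<open>Split off one active component: by the correlation bound it keeps a positive share
  of its norm.\<close>
lemma L2sq_sum_f_pos:
  assumes I: "I \<subseteq> J0set P q f" "I \<noteq> {}"
  shows "0 < L2sq P (\<lambda>x. \<Sum>j\<in>I. f j (x j))"
proof -
  obtain i where i: "i \<in> I"
    using I(2) by blast
  have I_sub: "I \<subseteq> {1..q}"
    using I(1) J0set_subset by blast
  have "{i} \<subseteq> {1..q}" "I - {i} \<subseteq> {1..q}"
    using i I_sub by auto
  then have "(1 - (rho P q qs)\<^sup>2) * L2sq P (\<lambda>x. \<Sum>j\<in>{i}. f j (x j))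
      \<le> L2sq P (\<lambda>x. (\<Sum>j\<in>{i}. f j (x j)) + (\<Sum>j\<in>I - {i}. f j (x j)))"
    using card_le_qs[of "{i}"] card_le_qs[of "I - {i}"] I(1) i
    by (intro L2sq_add_ge_rho[OF prob sets_P _ _ _ _ _ sum_f_in_sumsp sum_f_in_sumsp]) auto
  moreover have "0 < L2sq P (\<lambda>x. \<Sum>j\<in>{i}. f j (x j))"
    using I(1) i unfolding J0set_def by (auto simp: lift_def)
  moreover have "(\<lambda>x. (\<Sum>j\<in>{i}. f j (x j)) + (\<Sum>j\<in>I - {i}. f j (x j))) = (\<lambda>x. \<Sum>j\<in>I. f j (x j))"
    using finite_subset[OF I_sub] i by (simp add: sum.remove)
  ultimately show ?thesis
    using one_minus_rho_sq_pos by (metis mult_pos_pos order_less_le_trans)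
qed

lemma kappa_pos:
  assumes "J0set P q f \<noteq> {}"
  shows "0 < kappa P q f"
  unfolding kappa_def using assms L2sq_sum_f_pos
  by (subst Min_gr_iff[OF finite_L2sq_sums[where R = "\<lambda>J'. J' \<noteq> {}"]]) auto

lemma kappa_l_pos:
  assumes "I \<subseteq> J0set P q f" "I \<noteq> {}"
  shows "0 < kappa_l P q f (card I)"
proof -
  have "J0set P q f \<noteq> {}"
    using assms by blast
  then show ?thesis
    using order_less_le_trans[OF kappa_pos kappa_le_kappa_l[OF assms]] by blast
qed

end

locale sieve_approximation = additive_model +
  fixes \<alpha> K C :: "nat \<Rightarrow> real" and m :: "nat \<Rightarrow> nat" and eps' c' :: real
    and g :: "nat \<Rightarrow> (nat \<Rightarrow> real) \<Rightarrow> real"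
  assumes J0set_nonempty: "J0set P q f \<noteq> {}"
    and smooth: "\<And>j. j \<in> {1..q} \<Longrightarrow> \<alpha> j > 1/2 \<and> K j > 0 \<and> f j \<in> sob (\<alpha> j) (K j)"
    and eps'_pos: "eps' > 0"
    and near_orthogonal: "\<And>I gs. I \<subseteq> {1..q} \<Longrightarrow> card I \<le> qs \<Longrightarrow> (\<forall>j\<in>I. gs j \<in> Hsp P q j) \<Longrightarrow>
      L2sq P (\<lambda>x. \<Sum>j\<in>I. gs j x) \<le> (1 + eps') * (\<Sum>j\<in>I. L2sq P (gs j))"
    and C_pos: "\<And>j. j \<in> {1..q} \<Longrightarrow> C j > 0"
    and approximation_rate: "\<And>j h mm gg. j \<in> {1..q} \<Longrightarrow> h \<in> sob (\<alpha> j) (K j) \<Longrightarrow>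
      lift j h \<in> Hsp P q j \<Longrightarrow> mm \<ge> 1 \<Longrightarrow> is_proj P (Vsp P q j mm) (lift j h) gg \<Longrightarrow>
      L2sq P (\<lambda>x. lift j h x - gg x) \<le> C j * (K j)\<^sup>2 * real mm powr (- 2 * \<alpha> j)"
    and c': "0 < c'" "c' < 1"
    and condition_L: "\<And>j. j \<in> {1..q} \<Longrightarrow> m j \<ge> 1 \<and> real (m j) \<ge>
      (C j * (K j)\<^sup>2 * real qs * (1 + eps') / (c' * (1 - (rho P q qs)\<^sup>2) * kappa P q f)) powr (1 / (2 * \<alpha> j))"
    and g_proj: "\<And>j. j \<in> J0set P q f \<Longrightarrow> is_proj P (Vsp P q j (m j)) (lift j (f j)) (g j)"
begin

lemma qs_pos: "1 \<le> qs"
proof -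
  obtain j where "j \<in> J0set P q f"
    using J0set_nonempty by blast
  then show ?thesis
    using card_le_qs[of "{j}"] by simp
qed

lemma g_in_Vsp: "j \<in> J0set P q f \<Longrightarrow> g j \<in> Vsp P q j (m j)"
  using g_proj unfolding is_proj_def by blast

lemma approx_error_in_Hsp:
  "j \<in> J0set P q f \<Longrightarrow> (\<lambda>x. lift j (f j) x - g j x) \<in> Hsp P q j"
  using Hsp_diff[OF prob sets_P _ lift_f_in_Hsp] g_in_Vsp Vsp_subset_Hsp J0set_subset by blast

lemma sum_g_in_VJ: "(\<lambda>x. \<Sum>j\<in>J0set P q f. g j x) \<in> VJ P q m (J0set P q f)"
  unfolding VJ_def sumsp_def mem_Collect_eq by (rule exI[of _ g]) (use g_in_Vsp in blast)

lemma g_square_integrable: "j \<in> J0set P q f \<Longrightarrow> square_integrable P (g j)"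
  using Hsp_square_integrable[OF sets_P] g_in_Vsp Vsp_subset_Hsp J0set_subset by blast

lemma approx_error_square_integrable:
  "j \<in> J0set P q f \<Longrightarrow> square_integrable P (\<lambda>x. lift j (f j) x - g j x)"
  using Hsp_square_integrable[OF sets_P] approx_error_in_Hsp J0set_subset by blast

lemma approx_error_le:
  assumes j: "j \<in> J0set P q f"
  shows "L2sq P (\<lambda>x. lift j (f j) x - g j x)
    \<le> c' * (1 - (rho P q qs)\<^sup>2) * kappa P q f / (real qs * (1 + eps'))"
proof -
  define b where "b = c' * (1 - (rho P q qs)\<^sup>2) * kappa P q f / (real qs * (1 + eps'))"
  have j1: "j \<in> {1..q}"
    using j J0set_subset by blast
  have b_pos: "0 < b"
    unfolding b_def using c' one_minus_rho_sq_pos kappa_pos[OF J0set_nonempty] eps'_pos qs_pos by simp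
  have CK_pos: "0 < C j * (K j)\<^sup>2"
    using C_pos[OF j1] smooth[OF j1] by simp
  have "L2sq P (\<lambda>x. lift j (f j) x - g j x) \<le> C j * (K j)\<^sup>2 * real (m j) powr (- (2 * \<alpha> j))"
    using approximation_rate[OF j1 _ lift_f_in_Hsp[OF j1] _ g_proj[OF j]] smooth[OF j1] condition_L[OF j1]
    by simp
  also have "\<dots> \<le> C j * (K j)\<^sup>2 * (1 / (C j * (K j)\<^sup>2 / b))"
  proof (rule mult_left_mono[OF powr_neg_le_inverse])
    show "(C j * (K j)\<^sup>2 / b) powr (1 / (2 * \<alpha> j)) \<le> real (m j)"
      using condition_L[OF j1] qs_pos eps'_pos unfolding b_def by (simp add: field_simps)
  qed (use CK_pos b_pos smooth[OF j1] in auto)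
  also have "\<dots> = b"
  proof -
    have "x * (1 / (x / b)) = b" if "0 < x" for x :: real
      using that by simp
    then show ?thesis
      using CK_pos by blast
  qed
  finally show ?thesis
    unfolding b_def .
qed

lemma approx_error_sum_le:
  assumes I: "I \<subseteq> J0set P q f"
  shows "L2sq P (\<lambda>x. \<Sum>j\<in>I. lift j (f j) x - g j x) \<le> c' * (1 - (rho P q qs)\<^sup>2) * kappa P q f"
proof -
  let ?b = "c' * (1 - (rho P q qs)\<^sup>2) * kappa P q f / (real qs * (1 + eps'))"
  have "L2sq P (\<lambda>x. \<Sum>j\<in>I. lift j (f j) x - g j x)
      \<le> (1 + eps') * (\<Sum>j\<in>I. L2sq P (\<lambda>x. lift j (f j) x - g j x))"
  proof (rule near_orthogonal)
    show "I \<subseteq> {1..q}" "card I \<le> qs"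
      using I J0set_subset card_le_qs by auto
    show "\<forall>j\<in>I. (\<lambda>x. lift j (f j) x - g j x) \<in> Hsp P q j"
      using I approx_error_in_Hsp by blast
  qed
  also have "\<dots> \<le> (1 + eps') * (real qs * ?b)"
  proof (rule mult_left_mono)
    have "(\<Sum>j\<in>I. L2sq P (\<lambda>x. lift j (f j) x - g j x)) \<le> real (card I) * ?b"
      by (rule sum_bounded_above) (use approx_error_le I in blast)
    also have "\<dots> \<le> real qs * ?b"
      using card_le_qs[OF I] c' one_minus_rho_sq_pos kappa_pos[OF J0set_nonempty] eps'_pos
      by (intro mult_right_mono) auto
    finally show "(\<Sum>j\<in>I. L2sq P (\<lambda>x. lift j (f j) x - g j x)) \<le> real qs * ?b" .
  qed (use eps'_pos in simp)
  also have "\<dots> = c' * (1 - (rho P q qs)\<^sup>2) * kappa P q f"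
    using qs_pos eps'_pos by simp
  finally show ?thesis .
qed

text \<open>\<open>f\<^sub>I = \<Sum>\<^sub>j\<^sub>\<in>\<^sub>I \<Pi>\<^sub>V\<^sub>j f\<^sub>j + e\<close> with \<open>\<parallel>f\<^sub>I\<parallel>\<^sup>2 \<ge> \<kappa>\<^sub>l\<close> and \<open>\<parallel>e\<parallel>\<^sup>2 \<le> c'\<kappa> \<le> c'\<kappa>\<^sub>l\<close>.\<close>
lemma L2sq_sum_g_ge:
  assumes I: "I \<subseteq> J0set P q f" "I \<noteq> {}"
  shows "(1 - sqrt c')\<^sup>2 * kappa_l P q f (card I) \<le> L2sq P (\<lambda>x. \<Sum>j\<in>I. g j x)"
proof (rule L2sq_ge_of_perturbation)
  have I_sub: "I \<subseteq> {1..q}"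
    using I(1) J0set_subset by blast
  show "square_integrable P (\<lambda>x. \<Sum>j\<in>I. g j x)"
    using I(1) g_square_integrable by (intro square_integrable_sum[OF finite_subset[OF I_sub]]) auto
  show "square_integrable P (\<lambda>x. \<Sum>j\<in>I. lift j (f j) x - g j x)"
    using I(1) approx_error_square_integrable
    by (intro square_integrable_sum[OF finite_subset[OF I_sub]]) auto
  show "kappa_l P q f (card I) \<le> L2sq P (\<lambda>x. (\<Sum>j\<in>I. g j x) + (\<Sum>j\<in>I. lift j (f j) x - g j x))"
    using kappa_l_le_L2sq[OF I(1)] by (simp add: lift_def sum_subtractf)
  have "c' * (1 - (rho P q qs)\<^sup>2) * kappa P q f \<le> c' * 1 * kappa_l P q f (card I)"
    using c' one_minus_rho_sq_pos kappa_pos[OF J0set_nonempty] kappa_le_kappa_l[OF I]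
    by (intro mult_mono) auto
  then show "L2sq P (\<lambda>x. \<Sum>j\<in>I. lift j (f j) x - g j x) \<le> c' * kappa_l P q f (card I)"
    using approx_error_sum_le[OF I(1)] by simp
  show "0 \<le> kappa_l P q f (card I)"
    using kappa_l_pos[OF I] by simp
qed (use c' in auto)

lemma empirical_diff_ge:
  fixes Xs :: "'n::finite \<Rightarrow> nat \<Rightarrow> real"
  assumes J: "J \<subseteq> {1..q}" "card J \<le> qs" "J0set P q f - J \<noteq> {}"
    and E: "Eev P q m Xs \<delta> (J \<union> J0set P q f)" and "\<delta> \<le> 1"
    and v: "v \<in> VJ P q m J"
  shows "(1 - \<delta>) * (1 - sqrt c')\<^sup>2 * ((1 - (rho P q qs)\<^sup>2) * kappa_l P q f (card (J0set P q f - J)))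
    \<le> emp_sq Xs (\<lambda>x. (\<Sum>j\<in>J0set P q f. g j x) - v x)"
proof -
  let ?D = "J0set P q f - J" and ?d = "\<lambda>x. (\<Sum>j\<in>J0set P q f. g j x) - v x"
  obtain w where w: "w \<in> VJ P q m J" "?d = (\<lambda>x. (\<Sum>j\<in>?D. g j x) + w x)"
      "?d \<in> VJ P q m (J \<union> J0set P q f)"
    using VJ_diff_decompose[OF prob sets_P J(1) J0set_subset g_in_Vsp v] by blast
  have rho_bound: "(1 - (rho P q qs)\<^sup>2) * L2sq P (\<lambda>x. \<Sum>j\<in>?D. g j x) \<le> L2sq P ?d"
    unfolding w(2)
  proof (rule L2sq_add_ge_rho[OF prob sets_P _ J(1) _ _ J(2)])
    show "?D \<subseteq> {1..q}" "?D \<inter> J = {}" "card ?D \<le> qs"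
      using J0set_subset card_le_qs[of ?D] by auto
    show "(\<lambda>x. \<Sum>j\<in>?D. g j x) \<in> sumsp (Hsp P q) ?D"
      unfolding sumsp_def mem_Collect_eq
      by (rule exI[of _ g]) (use g_in_Vsp Vsp_subset_Hsp in blast)
    show "w \<in> sumsp (Hsp P q) J"
      using w(1) VJ_subset_sumsp_Hsp by blast
  qed
  have "(1 - \<delta>) * (1 - sqrt c')\<^sup>2 * ((1 - (rho P q qs)\<^sup>2) * kappa_l P q f (card ?D))
      = (1 - \<delta>) * ((1 - (rho P q qs)\<^sup>2) * ((1 - sqrt c')\<^sup>2 * kappa_l P q f (card ?D)))"
    by (simp add: ac_simps)
  also have "\<dots> \<le> (1 - \<delta>) * ((1 - (rho P q qs)\<^sup>2) * L2sq P (\<lambda>x. \<Sum>j\<in>?D. g j x))"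
    using L2sq_sum_g_ge[of ?D] J(3) \<open>\<delta> \<le> 1\<close> one_minus_rho_sq_pos
    by (intro mult_left_mono) auto
  also have "\<dots> \<le> (1 - \<delta>) * L2sq P ?d"
    using rho_bound \<open>\<delta> \<le> 1\<close> by (intro mult_left_mono) auto
  also have "\<dots> \<le> emp_sq Xs ?d"
    using E w(3) unfolding Eev_def by blast
  finally show ?thesis .
qed

end

theorem proposition6:
  fixes P :: "(nat \<Rightarrow> real) measure" and q qs :: nat
    and f :: "nat \<Rightarrow> real \<Rightarrow> real" and p :: "nat \<Rightarrow> real \<Rightarrow> real"
    and c c' \<delta> eps' :: real and \<alpha> K C :: "nat \<Rightarrow> real" and m :: "nat \<Rightarrow> nat"
    and Xs :: "'n::finite \<Rightarrow> nat \<Rightarrow> real" and J :: "nat set"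
    and g :: "nat \<Rightarrow> (nat \<Rightarrow> real) \<Rightarrow> real"
  defines "J0 \<equiv> J0set P q f"
    and "F \<equiv> (\<lambda>x. \<Sum>j=1..q. f j (x j))"
    and "\<rho> \<equiv> rho P q qs"
    and "\<kappa> \<equiv> kappa P q f"
    and "\<kappa>l \<equiv> kappa_l P q f (card (J0set P q f - J))"
  assumes P: "prob_space P" "sets P = sets (PiM {1..q} (\<lambda>_. borel))" "q \<ge> 1"
    and f_L2: "\<forall>j\<in>{1..q}. f j \<in> borel_measurable borel \<and> integrable P (\<lambda>x. (f j (x j))\<^sup>2)"
    and f_centered: "\<forall>j\<in>{1..q}. j < q \<longrightarrow> (LINT x|P. f j (x j)) = 0"
    and s_le: "card J0 \<le> qs"
    and A1: "\<rho> < 1"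
    and A2_c: "c > 0"
    and A2: "\<forall>j\<in>{1..q}. p j \<in> borel_measurable borel \<and> (\<forall>t. 0 \<le> p j t)
        \<and> distr P borel (\<lambda>x. x j) = density lborel (\<lambda>t. ennreal (p j t))
        \<and> (AE x in P. x j \<in> {0..1})
        \<and> (\<forall>t\<in>{0..1}. c \<le> p j t \<and> p j t \<le> 1 / c)
        \<and> \<alpha> j > 1/2 \<and> K j > 0 \<and> f j \<in> sob (\<alpha> j) (K j)"
    and eps': "eps' > 0"
      "\<forall>J'. J' \<subseteq> {1..q} \<and> card J' \<le> qs \<longrightarrow> (\<forall>gs. (\<forall>j\<in>J'. gs j \<in> Hsp P q j) \<longrightarrow>
          L2sq P (\<lambda>x. \<Sum>j\<in>J'. gs j x) \<le> (1 + eps') * (\<Sum>j\<in>J'. L2sq P (gs j)))"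
    and C: "\<forall>j\<in>{1..q}. C j > 0 \<and> (\<forall>h mm gg. h \<in> sob (\<alpha> j) (K j) \<and> lift j h \<in> Hsp P q j \<and> mm \<ge> 1
        \<and> is_proj P (Vsp P q j mm) (lift j h) gg \<longrightarrow>
          L2sq P (\<lambda>x. lift j h x - gg x) \<le> C j * (K j)\<^sup>2 * real mm powr (- 2 * \<alpha> j)
          \<and> (AE x in P. (lift j h x - gg x)\<^sup>2 \<le> C j * (K j)\<^sup>2 * real mm powr (1 - 2 * \<alpha> j)))"
    and J0_ne: "J0 \<noteq> {}"
    and delta: "0 < \<delta>" "\<delta> < 1"
    and c': "0 < c'" "c' < 1"
    and condL: "\<forall>j\<in>{1..q}. m j \<ge> 1 \<and>
        real (m j) \<ge> (C j * (K j)\<^sup>2 * real qs * (1 + eps') / (c' * (1 - \<rho>\<^sup>2) * \<kappa>)) powr (1 / (2 * \<alpha> j))"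
    and condC: "2/3 * (1 - sqrt c')\<^sup>2 - 8 * (1 + \<delta>) / (1 - \<delta>)\<^sup>2 * c' \<ge> 1/2"
    and J: "J \<subseteq> {1..q}" "card J \<le> qs" "J0 - J \<noteq> {}"
    and g_proj: "\<forall>j\<in>J0. is_proj P (Vsp P q j (m j)) (lift j (f j)) (g j)"
    and event_E: "Eev P q m Xs \<delta> (J \<union> J0)"
    and event_A: "emp_sq Xs (\<lambda>x. F x - (\<Sum>j\<in>J0. g j x)) \<le> 2 * c' * (1 - \<rho>\<^sup>2) * \<kappa>"
  shows "\<forall>u0 u. is_vproj (svec Xs ` VJ P q m J0) (svec Xs F) u0
              \<and> is_vproj (svec Xs ` VJ P q m J) (svec Xs F) u \<longrightarrow>
           (norm u0)\<^sup>2 / real CARD('n) - (norm u)\<^sup>2 / real CARD('n)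
             \<ge> 1/2 * ((1 - \<delta>)\<^sup>2 / (1 + \<delta>)) * (1 - \<rho>\<^sup>2) * \<kappa>l"
proof (intro allI impI, elim conjE)
  fix u0 u
  assume u0: "is_vproj (svec Xs ` VJ P q m J0) (svec Xs F) u0"
    and u: "is_vproj (svec Xs ` VJ P q m J) (svec Xs F) u"
  interpret sieve_approximation P q qs f \<alpha> K C m eps' c' g
    by (intro sieve_approximation.intro additive_model.intro sieve_approximation_axioms.intro;
        insert P f_L2 f_centered s_le A1 A2 eps' C J0_ne c' condL g_proj;
        simp add: J0_def \<rho>_def \<kappa>_def)
  obtain v where v: "v \<in> VJ P q m J" "u = svec Xs v"
    using u unfolding is_vproj_def by blast
  note gap = empirical_projection_gap[OF u0 u sum_g_in_VJ[folded J0_def] v(2)]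
  have diff: "(1 - \<delta>) * (1 - sqrt c')\<^sup>2 * ((1 - \<rho>\<^sup>2) * \<kappa>l) \<le> emp_sq Xs (\<lambda>x. (\<Sum>j\<in>J0. g j x) - v x)"
    unfolding \<rho>_def \<kappa>l_def J0_def
    by (rule empirical_diff_ge[OF J(1,2) J(3)[unfolded J0_def] event_E[unfolded J0_def] _ v(1)])
      (use delta in simp)
  have "\<kappa> \<le> \<kappa>l"
    unfolding \<kappa>_def \<kappa>l_def by (rule kappa_le_kappa_l) (use J(3) J0_def in auto)
  then have "2 * c' * (1 - \<rho>\<^sup>2) * \<kappa> \<le> 2 * c' * (1 - \<rho>\<^sup>2) * \<kappa>l"
    using c' one_minus_rho_sq_pos unfolding \<rho>_def by (intro mult_left_mono) auto
  then have "emp_sq Xs (\<lambda>x. F x - (\<Sum>j\<in>J0. g j x)) \<le> 2 * c' * ((1 - \<rho>\<^sup>2) * \<kappa>l)"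
    using event_A by (simp add: mult.assoc)
  moreover have "0 \<le> (1 - \<rho>\<^sup>2) * \<kappa>l"
    using one_minus_rho_sq_pos kappa_l_pos[of "J0 - J"] J(3) unfolding \<rho>_def \<kappa>l_def J0_def by simp
  ultimately show "1/2 * ((1 - \<delta>)\<^sup>2 / (1 + \<delta>)) * (1 - \<rho>\<^sup>2) * \<kappa>l
      \<le> (norm u0)\<^sup>2 / real CARD('n) - (norm u)\<^sup>2 / real CARD('n)"
    using condition_C_gap[OF delta c'(1) condC _ diff _ gap] by (simp add: mult.assoc)
qed

end
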